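(* Let $d$ be an even positive integer and $n$ an odd integer such that $n \ge \max\{5(d+1)/2,\ 2d+7\}$. Then there are spherical 3-designs of size $n$ on $S^d$.
   Context: $S^d$ is the unit sphere in $\mathbb{R}^{d+1}$. A spherical $t$-design of size $n$ on $S^d$ is a collection $X$ of $n$ points of $S^d$ such that for every polynomial of degree at most $t$ its average over $S^d$ (surface measure) equals $\frac1{|X|}\sum_{x\in X}f(x)$. *)

theory Defs
  imports "HOL-Analysis.Analysis"
begin

text \<open>Points of R^(d+1) are vectors of type real^'n with CARD('n) = d+1.\<close>

definition poly_deg_le :: "nat \<Rightarrow> (real^'n \<Rightarrow> real) \<Rightarrow> bool" where
  "poly_deg_le t f \<longleftrightarrow>
     (\<exists>(A :: ('n \<Rightarrow> nat) set) (c :: ('n \<Rightarrow> nat) \<Rightarrow> real).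
        finite A \<and> (\<forall>\<alpha>\<in>A. (\<Sum>i\<in>UNIV. \<alpha> i) \<le> t) \<and>
        f = (\<lambda>x. \<Sum>\<alpha>\<in>A. c \<alpha> * (\<Prod>i\<in>UNIV. (x $ i) ^ \<alpha> i)))"

text \<open>Average over the unit sphere w.r.t. (normalized) surface measure, realised as the
  cone measure: the normalized surface measure of A is the normalized Lebesgue measure of
  the cone {r x | x in A, 0 < r <= 1}, i.e. the pushforward of uniform measure on the unit
  ball under x / |x|.\<close>
definition sphere_avg :: "('a::euclidean_space \<Rightarrow> real) \<Rightarrow> real" where
  "sphere_avg f =
     (LINT x : ball 0 1 | lborel. f (scaleR (1 / norm x) x)) / measure lborel (ball (0::'a) 1)"

definition spherical_design :: "nat \<Rightarrow> (real^'n) set \<Rightarrow> bool" where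
  "spherical_design t X \<longleftrightarrow>
     finite X \<and> X \<noteq> {} \<and> X \<subseteq> sphere 0 1 \<and>
     (\<forall>f. poly_deg_le t f \<longrightarrow> sphere_avg f = (\<Sum>x\<in>X. f x) / real (card X))"

end

theory Submission
  imports Defs
begin

(* Averages over the sphere of monomials of odd degree vanish by reflection symmetry, and
   the average of x_c^2 is 1/(d+1) by symmetry under permuting coordinates.  So a finite
   X on the sphere is a 3-design as soon as its coordinate sums of degree 1 and 3 vanish
   and its second moment matrix is |X|/(d+1) times the identity.

   Write d = 2s and n = 2r + 5.  Take a regular pentagon in two coordinates together with
   r antipodal pairs +-v_j, where v_0, ..., v_(r-1) are equally spaced samples of the
   trigonometric moment curve (a_0, a_1 sin t, a_1 cos t, a sin 2t, a cos 2t, ...,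
   a sin st, a cos st).  Antipodality and the pentagon's symmetry kill the odd moments.
   Since 2s < r, orthogonality of the characters of Z/r makes the second moment matrix of
   the samples diagonal; the amplitudes are chosen so that, together with the pentagon's
   contribution 5/2 in its two coordinates, every diagonal entry is n/(d+1) and every v_j
   is a unit vector.  The bound n > 5(d+1)/2 makes a_1 positive, which keeps all n points
   distinct. *)

section \<open>Averages over the sphere\<close>

lemma sphere_avg_cong:
  fixes f g :: "'a::euclidean_space \<Rightarrow> real"
  assumes [measurable]: "f \<in> borel_measurable borel" "g \<in> borel_measurable borel"
    and eq: "\<And>y. y \<in> sphere 0 1 \<Longrightarrow> f y = g y"
  shows "sphere_avg f = sphere_avg g"
proof -
  have "AE x \<in> ball 0 1 in lborel. f (scaleR (1 / norm x) x) = g (scaleR (1 / norm x) x)"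
    using AE_lborel_singleton[of 0] by eventually_elim (simp add: eq)
  then show ?thesis
    unfolding sphere_avg_def by (subst set_lebesgue_integral_cong_AE) simp_all
qed

lemma sphere_avg_const: "sphere_avg (\<lambda>_::'a::euclidean_space. c) = c"
proof -
  have "(LINT x : ball (0::'a) 1 | lborel. c) = measure lborel (ball (0::'a) 1) * c"
    using set_integral_const[of "ball (0::'a) 1" lborel c] emeasure_lborel_ball_finite[of "0::'a" 1]
    by (simp add: less_imp_neq)
  moreover have "measure lborel (ball (0::'a) 1) > 0" by (simp add: content_ball_pos)
  ultimately show ?thesis by (simp add: sphere_avg_def)
qed

lemma sphere_avg_cmult: "sphere_avg (\<lambda>x. c * f x) = c * sphere_avg f"
  by (simp add: sphere_avg_def)

lemma set_integrable_sphere_proj: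
  fixes f :: "'a::euclidean_space \<Rightarrow> real"
  assumes f: "continuous_on UNIV f"
  shows "set_integrable lborel (ball 0 1) (\<lambda>x. f (scaleR (1 / norm x) x))"
proof -
  have [measurable]: "f \<in> borel_measurable borel"
    using f by (rule borel_measurable_continuous_onI)
  have "bounded (f ` cball 0 1)"
    by (intro compact_imp_bounded compact_continuous_image continuous_on_subset[OF f]) auto
  then obtain B where B: "\<And>y. y \<in> cball 0 1 \<Longrightarrow> norm (f y) \<le> B"
    unfolding bounded_iff by blast
  show ?thesis
    unfolding set_integrable_def
  proof (rule integrableI_bounded_set_indicator)
    show "AE x \<in> ball 0 1 in lborel. norm (f (scaleR (1 / norm x) x)) \<le> B"
      by (intro AE_I2 impI B) (simp add: norm_divide)
  qed (use emeasure_lborel_ball_finite[of "0::'a" 1] in simp_all)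
qed

lemma sphere_avg_sum:
  fixes g :: "'b \<Rightarrow> 'a::euclidean_space \<Rightarrow> real"
  assumes "finite A" and "\<And>a. a \<in> A \<Longrightarrow> continuous_on UNIV (g a)"
  shows "sphere_avg (\<lambda>x. \<Sum>a\<in>A. g a x) = (\<Sum>a\<in>A. sphere_avg (g a))"
proof -
  have "(LINT x : ball 0 1 | lborel. \<Sum>a\<in>A. g a (scaleR (1 / norm x) x))
      = (\<Sum>a\<in>A. LINT x : ball 0 1 | lborel. g a (scaleR (1 / norm x) x))"
    unfolding set_lebesgue_integral_def scaleR_sum_right
    by (rule Bochner_Integration.integral_sum)
       (use set_integrable_sphere_proj[OF assms(2)] in \<open>simp add: set_integrable_def\<close>)
  then show ?thesis by (simp add: sphere_avg_def sum_divide_distrib)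
qed

definition signed_perm :: "('n \<Rightarrow> 'n) \<Rightarrow> ('n \<Rightarrow> real) \<Rightarrow> real^'n \<Rightarrow> real^'n" where
  "signed_perm p \<epsilon> x = (\<chi> i. \<epsilon> i * x $ p i)"

lemma measurable_signed_perm [measurable]: "signed_perm p \<epsilon> \<in> borel_measurable borel"
  unfolding signed_perm_def by (intro borel_measurable_continuous_onI continuous_intros)

lemma signed_perm_scaleR: "signed_perm p \<epsilon> (c *\<^sub>R x) = c *\<^sub>R signed_perm p \<epsilon> x"
  by (simp add: signed_perm_def vec_eq_iff)

lemma norm_signed_perm:
  assumes "bij p" and "\<And>i. \<bar>\<epsilon> i\<bar> = 1"
  shows "norm (signed_perm p \<epsilon> x) = norm x"
proof -
  have "(\<epsilon> i * x $ p i)\<^sup>2 = (x $ p i)\<^sup>2" for i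
    by (metis assms(2) abs_mult mult_1 power2_abs)
  then have "(\<Sum>i\<in>UNIV. (\<epsilon> i * x $ p i)\<^sup>2) = (\<Sum>i\<in>UNIV. (x $ p i)\<^sup>2)"
    by simp
  also have "\<dots> = (\<Sum>i\<in>UNIV. (x $ i)\<^sup>2)"
    using sum.reindex_bij_betw[of p UNIV UNIV "\<lambda>i. (x $ i)\<^sup>2"] assms(1) by (simp add: bij_betw_def)
  finally show ?thesis by (simp add: norm_vec_def L2_set_def signed_perm_def)
qed

lemma prod_Basis_vec: "(\<Prod>b\<in>(Basis::(real^'n) set). f b) = (\<Prod>i\<in>UNIV. f (axis i 1))"
  by (simp add: Basis_vec_def UNION_singleton_eq_range prod.reindex axis_eq_axis inj_on_def)

lemma vimage_signed_perm_box:
  fixes p :: "'n::finite \<Rightarrow> 'n"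
  assumes p: "bij p" and \<epsilon>: "\<And>i. \<bar>\<epsilon> i\<bar> = 1"
  obtains l' u' where "signed_perm p \<epsilon> -` box l u = box l' u'"
    and "\<And>j. u' $ j - l' $ j = u $ inv p j - l $ inv p j"
proof
  let ?q = "inv p"
  have pq: "p (?q j) = j" and qp: "?q (p j) = j" for j
    using p by (simp_all add: bij_is_surj surj_f_inv_f bij_is_inj inv_f_f)
  have \<epsilon>_cases: "\<epsilon> i = 1 \<or> \<epsilon> i = -1" for i
    using \<epsilon>[of i] by linarith
  define l' :: "real^'n" where "l' = (\<chi> j. if \<epsilon> (?q j) = 1 then l $ ?q j else - u $ ?q j)"
  define u' :: "real^'n" where "u' = (\<chi> j. if \<epsilon> (?q j) = 1 then u $ ?q j else - l $ ?q j)"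
  show "u' $ j - l' $ j = u $ ?q j - l $ ?q j" for j
    by (simp add: l'_def u'_def)
  have "x \<in> signed_perm p \<epsilon> -` box l u \<longleftrightarrow> (\<forall>i. l $ i < \<epsilon> i * x $ p i \<and> \<epsilon> i * x $ p i < u $ i)" for x
    by (simp add: signed_perm_def mem_box_cart)
  also have "\<dots> x \<longleftrightarrow> (\<forall>j. l $ ?q j < \<epsilon> (?q j) * x $ j \<and> \<epsilon> (?q j) * x $ j < u $ ?q j)" for x
    by (metis pq qp)
  also have "\<dots> x \<longleftrightarrow> x \<in> box l' u'" for x
  proof -
    have "(l $ ?q j < \<epsilon> (?q j) * x $ j \<and> \<epsilon> (?q j) * x $ j < u $ ?q j) \<longleftrightarrow> (l' $ j < x $ j \<and> x $ j < u' $ j)" for j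
      using \<epsilon>_cases[of "?q j"] by (auto simp: l'_def u'_def)
    then show ?thesis by (simp add: mem_box_cart)
  qed
  finally show "signed_perm p \<epsilon> -` box l u = box l' u'" by blast
qed

lemma lborel_distr_signed_perm:
  fixes p :: "'n::finite \<Rightarrow> 'n"
  assumes p: "bij p" and \<epsilon>: "\<And>i. \<bar>\<epsilon> i\<bar> = 1"
  shows "distr lborel borel (signed_perm p \<epsilon>) = lborel"
proof (rule lborel_eqI[symmetric])
  fix l u :: "real^'n"
  assume "\<And>b. b \<in> Basis \<Longrightarrow> l \<bullet> b \<le> u \<bullet> b"
  then have le: "l $ i \<le> u $ i" for i
    by (auto simp: Basis_vec_def cart_eq_inner_axis)
  obtain l' u' where pre: "signed_perm p \<epsilon> -` box l u = box l' u'"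
    and len: "\<And>j. u' $ j - l' $ j = u $ inv p j - l $ inv p j"
    using vimage_signed_perm_box[of p \<epsilon> l u, OF p \<epsilon>] by blast
  have "l' $ j \<le> u' $ j" for j
    using le[of "inv p j"] len[of j] by linarith
  then have "\<forall>b\<in>Basis. l' \<bullet> b \<le> u' \<bullet> b"
    by (auto simp: Basis_vec_def cart_eq_inner_axis[symmetric])
  then have "emeasure (distr lborel borel (signed_perm p \<epsilon>)) (box l u) = ennreal (\<Prod>j\<in>UNIV. u' $ j - l' $ j)"
    by (simp add: emeasure_distr pre emeasure_lborel_box_eq prod_Basis_vec cart_eq_inner_axis[symmetric])
  also have "(\<Prod>j\<in>UNIV. u' $ j - l' $ j) = (\<Prod>j\<in>UNIV. u $ inv p j - l $ inv p j)"
    by (simp add: len)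
  also have "\<dots> = (\<Prod>i\<in>UNIV. u $ i - l $ i)"
    using prod.reindex_bij_betw[of "inv p" UNIV UNIV "\<lambda>i. u $ i - l $ i"] bij_imp_bij_inv[OF p]
    by (simp add: bij_betw_def)
  also have "\<dots> = (\<Prod>b\<in>Basis. (u - l) \<bullet> b)"
    by (simp add: prod_Basis_vec cart_eq_inner_axis[symmetric])
  finally show "emeasure (distr lborel borel (signed_perm p \<epsilon>)) (box l u) = (\<Prod>b\<in>Basis. (u - l) \<bullet> b)" .
qed simp

lemma sphere_avg_signed_perm:
  fixes f :: "real^'n \<Rightarrow> real"
  assumes "bij p" and "\<And>i. \<bar>\<epsilon> i\<bar> = 1" and [measurable]: "f \<in> borel_measurable borel"
  shows "sphere_avg (\<lambda>x. f (signed_perm p \<epsilon> x)) = sphere_avg f"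
proof -
  have [measurable]: "ball (0::real^'n) 1 \<in> sets borel" by simp
  let ?h = "\<lambda>x. indicator (ball (0::real^'n) 1) x *\<^sub>R f (scaleR (1 / norm x) x)"
  have h_sp: "?h (signed_perm p \<epsilon> x) = indicator (ball 0 1) x *\<^sub>R f (signed_perm p \<epsilon> (scaleR (1 / norm x) x))" for x
    by (simp add: norm_signed_perm[OF assms(1,2)] signed_perm_scaleR indicator_def)
  have "(LINT x|lborel. ?h x) = (LINT x|distr lborel borel (signed_perm p \<epsilon>). ?h x)"
    by (simp add: lborel_distr_signed_perm[OF assms(1,2)])
  also have "\<dots> = (LINT x|lborel. ?h (signed_perm p \<epsilon> x))"
    by (rule integral_distr) simp_all
  finally show ?thesis
    unfolding sphere_avg_def set_lebesgue_integral_def h_sp by simp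
qed

section \<open>A moment criterion for spherical 3-designs\<close>

definition monomial :: "('n \<Rightarrow> nat) \<Rightarrow> real^'n \<Rightarrow> real" where
  "monomial \<alpha> x = (\<Prod>i\<in>UNIV. (x $ i) ^ \<alpha> i)"

lemma continuous_on_monomial: "continuous_on UNIV (monomial \<alpha>)"
  unfolding monomial_def by (intro continuous_intros)

lemma sphere_avg_monomial_odd:
  fixes \<alpha> :: "'n::finite \<Rightarrow> nat"
  assumes "odd (\<alpha> c)"
  shows "sphere_avg (monomial \<alpha>) = 0"
proof -
  define \<epsilon> :: "'n \<Rightarrow> real" where "\<epsilon> = (\<lambda>i. if i = c then -1 else 1)"
  have "(\<Prod>i\<in>UNIV. \<epsilon> i ^ \<alpha> i) = (\<Prod>i\<in>UNIV. if i = c then (-1) ^ \<alpha> c else 1)"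
    by (rule prod.cong) (auto simp: \<epsilon>_def)
  then have "(\<Prod>i\<in>UNIV. \<epsilon> i ^ \<alpha> i) = -1"
    using assms by simp
  then have reflect: "monomial \<alpha> (signed_perm id \<epsilon> y) = -1 * monomial \<alpha> y" for y
    unfolding monomial_def signed_perm_def by (simp add: power_mult_distrib prod.distrib)
  have "sphere_avg (monomial \<alpha>) = sphere_avg (\<lambda>y. monomial \<alpha> (signed_perm id \<epsilon> y))"
    by (rule sphere_avg_signed_perm[symmetric])
       (auto simp: \<epsilon>_def intro: borel_measurable_continuous_onI continuous_on_monomial)
  also have "\<dots> = - sphere_avg (monomial \<alpha>)"
    unfolding reflect sphere_avg_cmult by simp
  finally show ?thesis by simp
qed

lemma sphere_avg_monomial_odd_degree:
  fixes \<alpha> :: "'n::finite \<Rightarrow> nat"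
  assumes "odd (sum \<alpha> UNIV)"
  shows "sphere_avg (monomial \<alpha>) = 0"
proof -
  obtain c where "odd (\<alpha> c)"
    using assms dvd_sum[of UNIV 2 \<alpha>] by blast
  then show ?thesis by (rule sphere_avg_monomial_odd)
qed

lemma sphere_avg_coord_sq_swap:
  fixes a b :: "'n::finite"
  shows "sphere_avg (\<lambda>x::real^'n. (x $ a)\<^sup>2) = sphere_avg (\<lambda>x. (x $ b)\<^sup>2)"
proof -
  define p where "p = (\<lambda>i. if i = a then b else if i = b then a else i)"
  have "bij p"
    by (rule o_bij[of p]) (auto simp: p_def fun_eq_iff)
  moreover have "(signed_perm p (\<lambda>_. 1) x $ a)\<^sup>2 = (x $ b)\<^sup>2" for x :: "real^'n"
    by (simp add: signed_perm_def p_def)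
  ultimately show ?thesis
    using sphere_avg_signed_perm[of p "\<lambda>_. 1" "\<lambda>x::real^'n. (x $ a)\<^sup>2"] by simp
qed

lemma sphere_avg_coord_sq: "sphere_avg (\<lambda>x::real^'n::finite. (x $ c)\<^sup>2) = 1 / real CARD('n)"
proof -
  have "real CARD('n) * sphere_avg (\<lambda>x::real^'n. (x $ c)\<^sup>2) = (\<Sum>b\<in>(UNIV::'n set). sphere_avg (\<lambda>x::real^'n. (x $ c)\<^sup>2))"
    by simp
  also have "\<dots> = (\<Sum>b\<in>UNIV. sphere_avg (\<lambda>x::real^'n. (x $ b)\<^sup>2))"
    by (intro sum.cong refl sphere_avg_coord_sq_swap)
  also have "\<dots> = sphere_avg (\<lambda>x::real^'n. \<Sum>b\<in>UNIV. (x $ b)\<^sup>2)"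
    by (rule sphere_avg_sum[symmetric]) (auto intro!: continuous_intros)
  also have "\<dots> = sphere_avg (\<lambda>_::real^'n. 1)"
    by (rule sphere_avg_cong)
       (auto simp: norm_vec_def L2_set_def sum_nonneg intro!: borel_measurable_continuous_onI continuous_intros)
  finally show ?thesis
    by (simp add: sphere_avg_const field_simps)
qed

lemma monomial_count_list: "monomial (count_list cs) x = (\<Prod>c\<leftarrow>cs. x $ c)"
proof (induction cs)
  case (Cons c cs)
  have "monomial (count_list (c # cs)) x = (\<Prod>i\<in>UNIV. (if i = c then x $ c else 1) * (x $ i) ^ count_list cs i)"
    unfolding monomial_def by (intro prod.cong) auto
  then show ?case using Cons by (simp add: prod.distrib monomial_def)
qed (simp add: monomial_def)

lemma ex_count_list_eq:
  fixes \<alpha> :: "'a::finite \<Rightarrow> nat"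
  shows "\<exists>cs. \<alpha> = count_list cs"
proof (induction "sum \<alpha> UNIV" arbitrary: \<alpha>)
  case 0
  then have "\<alpha> = count_list []" by auto
  then show ?case ..
next
  case (Suc k)
  have "\<exists>c. \<alpha> c > 0"
  proof (rule ccontr)
    assume "\<nexists>c. \<alpha> c > 0"
    then have "\<alpha> = (\<lambda>_. 0)" by auto
    with Suc.hyps(2) show False by simp
  qed
  then obtain c where c: "\<alpha> c > 0" ..
  define \<beta> where "\<beta> = \<alpha>(c := \<alpha> c - 1)"
  have "sum \<alpha> UNIV = \<alpha> c + sum \<alpha> (UNIV - {c})" and "sum \<beta> UNIV = \<beta> c + sum \<beta> (UNIV - {c})"
    by (simp_all add: sum.remove)
  moreover have "sum \<alpha> (UNIV - {c}) = sum \<beta> (UNIV - {c})"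
    by (intro sum.cong) (auto simp: \<beta>_def)
  moreover have \<beta>c: "\<beta> c + 1 = \<alpha> c"
    using c by (simp add: \<beta>_def)
  ultimately have "k = sum \<beta> UNIV"
    using Suc.hyps(2) by linarith
  then obtain cs where cs: "\<beta> = count_list cs"
    using Suc.hyps(1) by blast
  have "\<alpha> i = count_list (c # cs) i" for i
    using fun_cong[OF cs, of i] \<beta>c by (cases "i = c") (simp_all add: \<beta>_def)
  then have "\<alpha> = count_list (c # cs)" ..
  then show ?case ..
qed

lemma sphere_avg_monomial_eq_average:
  fixes X :: "(real^'n::finite) set"
  assumes "finite X" and "X \<noteq> {}"
    and M1: "\<And>a. (\<Sum>x\<in>X. x $ a) = 0"
    and M2: "\<And>a b. (\<Sum>x\<in>X. x $ a * x $ b) = (if a = b then real (card X) / real CARD('n) else 0)"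
    and M3: "\<And>a b c. (\<Sum>x\<in>X. x $ a * x $ b * x $ c) = 0"
    and deg: "sum \<alpha> UNIV \<le> 3"
  shows "sphere_avg (monomial \<alpha>) = (\<Sum>x\<in>X. monomial \<alpha> x) / real (card X)"
proof -
  obtain cs where \<alpha>: "\<alpha> = count_list cs"
    using ex_count_list_eq by blast
  have len: "sum \<alpha> UNIV = length cs"
    unfolding \<alpha> by (simp add: sum_count_set)
  have mon: "monomial \<alpha> = (\<lambda>x. \<Prod>c\<leftarrow>cs. x $ c)"
    unfolding \<alpha> by (simp add: monomial_count_list fun_eq_iff)
  have card_pos: "real (card X) > 0"
    using assms(1,2) by (simp add: card_gt_0_iff)
  consider "cs = []" | a where "cs = [a]" | a b where "cs = [a, b]" | a b c where "cs = [a, b, c]"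
    using deg len by (auto simp: numeral_3_eq_3 le_Suc_eq length_Suc_conv)
  then show ?thesis
  proof cases
    case 1
    then show ?thesis using card_pos by (simp add: mon sphere_avg_const)
  next
    case (2 a)
    then have "sphere_avg (monomial \<alpha>) = 0"
      using len by (intro sphere_avg_monomial_odd_degree) simp
    then show ?thesis using 2 M1[of a] by (simp add: mon)
  next
    case (3 a b)
    show ?thesis
    proof (cases "a = b")
      case True
      then show ?thesis
        using 3 M2[of a a] card_pos sphere_avg_coord_sq[of a] by (simp add: mon power2_eq_square)
    next
      case False
      then have "sphere_avg (monomial \<alpha>) = 0"
        using 3 by (intro sphere_avg_monomial_odd[of _ a]) (simp add: \<alpha>)
      then show ?thesis using False 3 M2[of a b] by (simp add: mon mult.commute)
    qed
  next
    case (4 a b c)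
    then have "sphere_avg (monomial \<alpha>) = 0"
      using len by (intro sphere_avg_monomial_odd_degree) simp
    then show ?thesis using 4 M3[of a b c] by (simp add: mon mult.assoc)
  qed
qed

lemma spherical_design_3I:
  fixes X :: "(real^'n::finite) set"
  assumes "finite X" and "X \<noteq> {}" and "X \<subseteq> sphere 0 1"
    and "\<And>a. (\<Sum>x\<in>X. x $ a) = 0"
    and "\<And>a b. (\<Sum>x\<in>X. x $ a * x $ b) = (if a = b then real (card X) / real CARD('n) else 0)"
    and "\<And>a b c. (\<Sum>x\<in>X. x $ a * x $ b * x $ c) = 0"
  shows "spherical_design 3 X"
  unfolding spherical_design_def
proof (intro conjI allI impI)
  fix f :: "real^'n \<Rightarrow> real"
  assume "poly_deg_le 3 f"
  then obtain A c where A: "finite A" "\<forall>\<alpha>\<in>A. sum \<alpha> UNIV \<le> 3"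
    and f: "f = (\<lambda>x. \<Sum>\<alpha>\<in>A. c \<alpha> * monomial \<alpha> x)"
    unfolding poly_deg_le_def monomial_def by blast
  have "sphere_avg f = (\<Sum>\<alpha>\<in>A. c \<alpha> * sphere_avg (monomial \<alpha>))"
    unfolding f using A(1)
    by (subst sphere_avg_sum) (auto simp: sphere_avg_cmult intro!: continuous_intros continuous_on_monomial)
  also have "\<dots> = (\<Sum>\<alpha>\<in>A. c \<alpha> * ((\<Sum>x\<in>X. monomial \<alpha> x) / real (card X)))"
    using A(2) assms by (intro sum.cong refl) (simp add: sphere_avg_monomial_eq_average)
  also have "\<dots> = (\<Sum>x\<in>X. f x) / real (card X)"
    unfolding f by (simp add: sum_divide_distrib sum_distrib_left sum.swap[of _ A X])
  finally show "sphere_avg f = (\<Sum>x\<in>X. f x) / real (card X)" .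
qed (use assms in auto)

section \<open>Sampled trigonometric moment curves\<close>

definition cos_orbit_sum :: "nat \<Rightarrow> int \<Rightarrow> real \<Rightarrow> real" where
  "cos_orbit_sum N F p = (if int N dvd F then real N * cos p else 0)"

lemma sum_cos_orbit:
  assumes "N > 0"
  shows "(\<Sum>j<N. cos (of_int F * (2 * pi * real j / real N) + p)) = cos_orbit_sum N F p"
proof (cases "int N dvd F")
  case True
  then obtain q where q: "F = int N * q" by blast
  have "cos (of_int F * (2 * pi * real j / real N) + p) = cos p" for j
  proof -
    have "of_int F * (2 * pi * real j / real N) = 2 * pi * of_int (q * int j)"
      using assms by (simp add: q field_simps)
    then show ?thesis by (simp only: cos_add cos_int_2pin sin_int_2pin)
  qed
  then show ?thesis using True by (simp add: cos_orbit_sum_def)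
next
  case False
  define z where "z = cis (2 * pi * of_int F / real N)"
  have z_pow: "z ^ j = cis (of_int F * (2 * pi * real j / real N))" for j
    unfolding z_def Complex.DeMoivre by (simp add: field_simps)
  have "z ^ N = cis (2 * pi * of_int F)"
    unfolding z_pow using assms by (simp add: mult.commute)
  also have "\<dots> = 1"
    by (rule cis_multiple_2pi) simp
  finally have "z ^ N = 1" .
  moreover have "z \<noteq> 1"
  proof
    assume "z = 1"
    then have "cos (2 * pi * of_int F / real N) = 1" unfolding z_def by (metis cis.sel(1) one_complex.sel(1))
    then obtain k :: int where "2 * pi * of_int F / real N = real_of_int k * 2 * pi"
      using cos_one_2pi_int by blast
    then have "real_of_int F = real_of_int (k * int N)" using assms by (simp add: field_simps)
    then show False using False by (metis of_int_eq_iff dvd_triv_right)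
  qed
  ultimately have "(\<Sum>j<N. z ^ j) = 0" using geometric_sum[of z N] by simp
  then have "Re (\<Sum>j<N. z ^ j * cis p) = 0" by (simp add: sum_distrib_right[symmetric])
  then show ?thesis using False by (simp add: z_pow cis_mult cos_orbit_sum_def)
qed

lemma cos_orbit_sum_small:
  assumes "\<bar>F\<bar> < int N"
  shows "cos_orbit_sum N F p = (if F = 0 then real N * cos p else 0)"
proof -
  have "int N dvd F \<Longrightarrow> F = 0"
    using assms by (meson dvd_abs_iff zdvd_not_zless zero_less_abs_iff)
  then show ?thesis by (auto simp: cos_orbit_sum_def)
qed

lemma cos_times_cos_times_cos:
  fixes a b c :: real
  shows "cos a * cos b * cos c = (cos (a - b - c) + cos (a - b + c) + cos (a + b - c) + cos (a + b + c)) / 4"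
proof -
  have "cos a * cos b * cos c = (cos (a - b) * cos c + cos (a + b) * cos c) / 2"
    by (simp add: cos_times_cos[of a b] field_simps)
  also have "\<dots> = (cos (a - b - c) + cos (a - b + c) + cos (a + b - c) + cos (a + b + c)) / 4"
    by (simp only: cos_times_cos[of "a - b" c] cos_times_cos[of "a + b" c]) (simp add: field_simps)
  finally show ?thesis .
qed

definition harmonic_freq :: "nat \<Rightarrow> int" where
  "harmonic_freq k = int ((k + 1) div 2)"

definition harmonic_phase :: "nat \<Rightarrow> real" where
  "harmonic_phase k = (if odd k then - (pi / 2) else 0)"

(* Coordinate k of the curve (A 0, A 1 sin t, A 2 cos t, A 3 sin 2t, A 4 cos 2t, ...):
   its frequency is (k + 1) div 2, and the phase -pi/2 turns cos into sin for odd k. *)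
definition trig_moment_curve :: "(nat \<Rightarrow> real) \<Rightarrow> real \<Rightarrow> nat \<Rightarrow> real" where
  "trig_moment_curve A \<theta> k = A k * cos (of_int (harmonic_freq k) * \<theta> + harmonic_phase k)"

lemma trig_moment_curve_mult2:
  "trig_moment_curve A \<theta> k * trig_moment_curve A \<theta> l = A k * A l / 2 *
    (cos (of_int (harmonic_freq k - harmonic_freq l) * \<theta> + (harmonic_phase k - harmonic_phase l))
     + cos (of_int (harmonic_freq k + harmonic_freq l) * \<theta> + (harmonic_phase k + harmonic_phase l)))"
  unfolding trig_moment_curve_def by (simp add: cos_times_cos algebra_simps)

lemma trig_moment_curve_mult3:
  "trig_moment_curve A \<theta> k * trig_moment_curve A \<theta> l * trig_moment_curve A \<theta> m = A k * A l * A m / 4 *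
    (cos (of_int (harmonic_freq k - harmonic_freq l - harmonic_freq m) * \<theta>
          + (harmonic_phase k - harmonic_phase l - harmonic_phase m))
     + cos (of_int (harmonic_freq k - harmonic_freq l + harmonic_freq m) * \<theta>
          + (harmonic_phase k - harmonic_phase l + harmonic_phase m))
     + cos (of_int (harmonic_freq k + harmonic_freq l - harmonic_freq m) * \<theta>
          + (harmonic_phase k + harmonic_phase l - harmonic_phase m))
     + cos (of_int (harmonic_freq k + harmonic_freq l + harmonic_freq m) * \<theta>
          + (harmonic_phase k + harmonic_phase l + harmonic_phase m)))"
proof -
  have angle_add: "of_int (F + G) * \<theta> + (p + q) = (of_int F * \<theta> + p) + (of_int G * \<theta> + q)"
    and angle_diff: "of_int (F - G) * \<theta> + (p - q) = (of_int F * \<theta> + p) - (of_int G * \<theta> + q)"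
    for F G :: int and p q :: real
    by (simp_all add: algebra_simps)
  let ?x = "\<lambda>k. of_int (harmonic_freq k) * \<theta> + harmonic_phase k"
  have "trig_moment_curve A \<theta> k * trig_moment_curve A \<theta> l * trig_moment_curve A \<theta> m
      = A k * A l * A m * (cos (?x k) * cos (?x l) * cos (?x m))"
    by (simp add: trig_moment_curve_def ac_simps)
  also have "\<dots> = A k * A l * A m / 4 * (cos (?x k - ?x l - ?x m) + cos (?x k - ?x l + ?x m)
      + cos (?x k + ?x l - ?x m) + cos (?x k + ?x l + ?x m))"
    unfolding cos_times_cos_times_cos by simp
  finally show ?thesis
    unfolding angle_add angle_diff .
qed

lemma sum_trig_moment_curve:
  assumes "N > 0"
  shows "(\<Sum>j<N. trig_moment_curve A (2 * pi * real j / real N) k)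
    = A k * cos_orbit_sum N (harmonic_freq k) (harmonic_phase k)"
  unfolding trig_moment_curve_def sum_distrib_left[symmetric] sum_cos_orbit[OF assms] ..

lemma sum_trig_moment_curve_mult2:
  assumes "N > 0"
  shows "(\<Sum>j<N. trig_moment_curve A (2 * pi * real j / real N) k
      * trig_moment_curve A (2 * pi * real j / real N) l)
    = A k * A l / 2 *
      (cos_orbit_sum N (harmonic_freq k - harmonic_freq l) (harmonic_phase k - harmonic_phase l)
       + cos_orbit_sum N (harmonic_freq k + harmonic_freq l) (harmonic_phase k + harmonic_phase l))"
  unfolding trig_moment_curve_mult2 sum_distrib_left[symmetric] sum.distrib sum_cos_orbit[OF assms] ..

lemma sum_trig_moment_curve_mult3:
  assumes "N > 0"
  shows "(\<Sum>j<N. trig_moment_curve A (2 * pi * real j / real N) k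
      * trig_moment_curve A (2 * pi * real j / real N) l
      * trig_moment_curve A (2 * pi * real j / real N) m)
    = A k * A l * A m / 4 *
      (cos_orbit_sum N (harmonic_freq k - harmonic_freq l - harmonic_freq m)
         (harmonic_phase k - harmonic_phase l - harmonic_phase m)
       + cos_orbit_sum N (harmonic_freq k - harmonic_freq l + harmonic_freq m)
         (harmonic_phase k - harmonic_phase l + harmonic_phase m)
       + cos_orbit_sum N (harmonic_freq k + harmonic_freq l - harmonic_freq m)
         (harmonic_phase k + harmonic_phase l - harmonic_phase m)
       + cos_orbit_sum N (harmonic_freq k + harmonic_freq l + harmonic_freq m)
         (harmonic_phase k + harmonic_phase l + harmonic_phase m))"
  unfolding trig_moment_curve_mult3 sum_distrib_left[symmetric] sum.distrib sum_cos_orbit[OF assms] ..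

lemma harmonic_freq_bounds:
  assumes "k < 2 * s + 1"
  shows "0 \<le> harmonic_freq k" and "harmonic_freq k \<le> int s"
  using assms unfolding harmonic_freq_def by auto

lemma harmonic_freq_eq_0_iff: "harmonic_freq k = 0 \<longleftrightarrow> k = 0"
  unfolding harmonic_freq_def by auto

lemma harmonic_freq_parity_inj:
  "harmonic_freq k = harmonic_freq l \<Longrightarrow> odd k = odd l \<Longrightarrow> k = l"
  unfolding harmonic_freq_def by presburger

lemma cos_harmonic_phase_diff:
  "cos (harmonic_phase k - harmonic_phase l) = (if odd k = odd l then 1 else 0)"
  unfolding harmonic_phase_def by auto

lemma sum_trig_moment_curve_orthogonal:
  assumes k: "k < 2 * s + 1" and l: "l < 2 * s + 1" and N: "2 * s < N"
  shows "(\<Sum>j<N. trig_moment_curve A (2 * pi * real j / real N) k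
      * trig_moment_curve A (2 * pi * real j / real N) l)
    = (if k = l then real N * (A k)\<^sup>2 * (if k = 0 then 1 else 1 / 2) else 0)"
proof -
  let ?f = harmonic_freq and ?p = harmonic_phase
  have "\<bar>?f k - ?f l\<bar> < int N" and "\<bar>?f k + ?f l\<bar> < int N"
    using harmonic_freq_bounds[OF k] harmonic_freq_bounds[OF l] N by linarith+
  then have "cos_orbit_sum N (?f k - ?f l) (?p k - ?p l) = (if k = l then real N else 0)"
    and "cos_orbit_sum N (?f k + ?f l) (?p k + ?p l) = (if k = 0 \<and> l = 0 then real N else 0)"
    using harmonic_freq_parity_inj[of k l] harmonic_freq_bounds[OF k] harmonic_freq_bounds[OF l]
    by (auto simp: cos_orbit_sum_small cos_harmonic_phase_diff harmonic_freq_eq_0_iff harmonic_phase_def)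
  then show ?thesis
    using N by (simp add: sum_trig_moment_curve_mult2 power2_eq_square)
qed

lemma sum_trig_moment_curve_sq:
  assumes "\<And>q. A (2 * q + 1) = A (2 * q + 2)"
  shows "(\<Sum>k<2 * s + 1. (trig_moment_curve A \<theta> k)\<^sup>2) = (A 0)\<^sup>2 + (\<Sum>q<s. (A (2 * q + 2))\<^sup>2)"
proof (induction s)
  case 0
  then show ?case by (simp add: trig_moment_curve_def harmonic_freq_def harmonic_phase_def)
next
  case (Suc s)
  have "harmonic_freq (2 * s + 1) = int (s + 1)" and "harmonic_freq (2 * s + 2) = int (s + 1)"
    unfolding harmonic_freq_def by presburger+
  then have "(trig_moment_curve A \<theta> (2 * s + 1))\<^sup>2 + (trig_moment_curve A \<theta> (2 * s + 2))\<^sup>2 = (A (2 * s + 2))\<^sup>2"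
    using assms[of s] by (simp add: trig_moment_curve_def harmonic_phase_def power_mult_distrib cos_diff
        flip: distrib_left)
  moreover have "{..<2 * Suc s + 1} = insert (2 * s + 2) (insert (2 * s + 1) {..<2 * s + 1})"
    by auto
  ultimately show ?case
    using Suc by simp
qed

lemma trig_moment_curve_sample_inj:
  assumes "A 1 \<noteq> 0" "A 2 \<noteq> 0" "j < N" "j' < N"
    and "trig_moment_curve A (2 * pi * real j / real N) 1 = trig_moment_curve A (2 * pi * real j' / real N) 1"
    and "trig_moment_curve A (2 * pi * real j / real N) 2 = trig_moment_curve A (2 * pi * real j' / real N) 2"
  shows "j = j'"
proof -
  let ?a = "2 * pi * real j / real N" and ?b = "2 * pi * real j' / real N"
  have "sin ?a = sin ?b" and "cos ?a = cos ?b"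
    using assms(1,2,5,6) by (simp_all add: trig_moment_curve_def harmonic_freq_def harmonic_phase_def cos_diff)
  then have "cos (?a - ?b) = 1"
    by (simp add: cos_diff flip: power2_eq_square)
  then obtain k :: int where "?a - ?b = real_of_int k * 2 * pi"
    using cos_one_2pi_int by blast
  then have "2 * pi * (real j - real j') = 2 * pi * (real_of_int k * real N)"
    using assms(3) by (simp add: field_simps)
  then have "real j - real j' = real_of_int k * real N"
    by simp
  then have k: "int j - int j' = k * int N"
    by (metis of_int_eq_iff of_int_mult of_int_of_nat_eq of_int_diff)
  have "\<bar>int j - int j'\<bar> < int N"
    using assms(3,4) by linarith
  then have "\<bar>k\<bar> * int N < 1 * int N"
    using k by (simp add: abs_mult)
  then have "\<bar>k\<bar> < 1"
    unfolding mult_less_cancel_right by simp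
  then have "k = 0"
    by simp
  then show ?thesis
    using k by simp
qed

(* With these amplitudes the 5 samples of the curve form a regular pentagon in
   coordinates 1 and 2. *)
definition pentagon_amp :: "nat \<Rightarrow> real" where
  "pentagon_amp k = of_bool (k = 1 \<or> k = 2)"

lemma sum_pentagon: "(\<Sum>t<5. trig_moment_curve pentagon_amp (2 * pi * real t / 5) k) = 0"
  using sum_trig_moment_curve[of 5 pentagon_amp k]
  by (auto simp: pentagon_amp_def cos_orbit_sum_def harmonic_freq_def)

lemma sum_pentagon_mult2:
  "(\<Sum>t<5. trig_moment_curve pentagon_amp (2 * pi * real t / 5) k
      * trig_moment_curve pentagon_amp (2 * pi * real t / 5) l)
    = (if k = l \<and> (k = 1 \<or> k = 2) then 5 / 2 else 0)"
proof (cases "(k = 1 \<or> k = 2) \<and> (l = 1 \<or> l = 2)")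
  case True
  then show ?thesis
    using sum_trig_moment_curve_orthogonal[of k 1 l 5 pentagon_amp] by (auto simp: pentagon_amp_def)
next
  case False
  then show ?thesis
    using sum_trig_moment_curve_mult2[of 5 pentagon_amp k l] by (auto simp: pentagon_amp_def)
qed

lemma sum_pentagon_mult3:
  "(\<Sum>t<5. trig_moment_curve pentagon_amp (2 * pi * real t / 5) k
      * trig_moment_curve pentagon_amp (2 * pi * real t / 5) l
      * trig_moment_curve pentagon_amp (2 * pi * real t / 5) m) = 0"
proof (cases "(k = 1 \<or> k = 2) \<and> (l = 1 \<or> l = 2) \<and> (m = 1 \<or> m = 2)")
  case True
  then have "harmonic_freq k = 1" "harmonic_freq l = 1" "harmonic_freq m = 1"
    by (auto simp: harmonic_freq_def)
  then show ?thesis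
    using sum_trig_moment_curve_mult3[of 5 pentagon_amp k l m] by (simp add: cos_orbit_sum_def)
next
  case False
  then show ?thesis
    using sum_trig_moment_curve_mult3[of 5 pentagon_amp k l m] by (auto simp: pentagon_amp_def)
qed

section \<open>The construction\<close>

locale pentagon_curve_design =
  fixes idx :: "'n::finite \<Rightarrow> nat" and s r :: nat
  assumes bij_idx: "bij_betw idx UNIV {..<2 * s + 1}"
    and s_pos: "0 < s" and r_gt: "2 * s < r"
    and size_gt: "5 * (2 * s + 1) < 2 * (2 * r + 5)"
begin

definition ratio :: real where
  "ratio = real (2 * r + 5) / real (2 * s + 1)"

(* The r antipodal pairs of curve samples contribute r (curve_amp k)^2 to the k-th diagonal
   entry of the second moment matrix, doubled for the constant coordinate k = 0, and the
   pentagon contributes 5/2 in coordinates 1 and 2; these amplitudes make every entry equal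
   to ratio = n/(d+1). *)
definition curve_amp :: "nat \<Rightarrow> real" where
  "curve_amp k = sqrt (if k = 0 then ratio / (2 * real r)
                       else if k \<le> 2 then (ratio - 5 / 2) / real r else ratio / real r)"

definition embed :: "(nat \<Rightarrow> real) \<Rightarrow> real^'n" where
  "embed g = (\<chi> i. g (idx i))"

definition pentagon_pt :: "nat \<Rightarrow> real^'n" where
  "pentagon_pt t = embed (trig_moment_curve pentagon_amp (2 * pi * real t / 5))"

definition curve_pt :: "nat \<Rightarrow> real^'n" where
  "curve_pt j = embed (trig_moment_curve curve_amp (2 * pi * real j / real r))"

definition design :: "(real^'n) set" where
  "design = pentagon_pt ` {..<5} \<union> curve_pt ` {..<r} \<union> (\<lambda>j. - curve_pt j) ` {..<r}"

lemma card_coords: "CARD('n) = 2 * s + 1"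
  using bij_betw_same_card[OF bij_idx] by simp

lemma idx_less: "idx i < 2 * s + 1"
  using bij_idx by (auto simp: bij_betw_def)

lemma idx_eq_iff: "idx i = idx i' \<longleftrightarrow> i = i'"
  using bij_idx by (auto simp: bij_betw_def inj_on_def)

lemma ex_idx_eq: "k < 2 * s + 1 \<Longrightarrow> \<exists>i. idx i = k"
  using bij_betw_imp_surj_on[OF bij_idx] by (metis lessThan_iff rangeE)

lemma sum_coords: "(\<Sum>i\<in>UNIV. F (idx i)) = (\<Sum>k<2 * s + 1. F k)"
  using sum.reindex_bij_betw[OF bij_idx, of F] by simp

lemma embed_nth [simp]: "embed g $ i = g (idx i)"
  by (simp add: embed_def)

lemma embed_eqD: "embed g = embed h \<Longrightarrow> k < 2 * s + 1 \<Longrightarrow> g k = h k"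
  using ex_idx_eq by (metis embed_nth)

lemma norm_embed: "norm (embed g) = sqrt (\<Sum>k<2 * s + 1. (g k)\<^sup>2)"
  unfolding norm_vec_def L2_set_def using sum_coords[of "\<lambda>k. (g k)\<^sup>2"] by simp

lemma ratio_gt: "ratio > 5 / 2"
  and ratio_mult: "ratio * real (2 * s + 1) = real (2 * r + 5)"
  using size_gt by (simp_all add: ratio_def field_simps)

lemma curve_amp_sq:
  "(curve_amp k)\<^sup>2 = (if k = 0 then ratio / (2 * real r)
                        else if k \<le> 2 then (ratio - 5 / 2) / real r else ratio / real r)"
  using ratio_gt r_gt by (simp add: curve_amp_def)

lemma curve_amp_pos: "curve_amp k > 0"
  using ratio_gt r_gt by (simp add: curve_amp_def)

lemma norm_pentagon_pt: "norm (pentagon_pt t) = 1"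
proof -
  let ?\<theta> = "2 * pi * real t / 5"
  have "(\<Sum>k<2 * s + 1. (trig_moment_curve pentagon_amp ?\<theta> k)\<^sup>2)
      = (pentagon_amp 0)\<^sup>2 + (\<Sum>q<s. (pentagon_amp (2 * q + 2))\<^sup>2)"
    by (rule sum_trig_moment_curve_sq) (simp add: pentagon_amp_def)
  also have "(\<Sum>q<s. (pentagon_amp (2 * q + 2))\<^sup>2) = (\<Sum>q<s. if q = 0 then 1 else 0)"
    by (intro sum.cong) (auto simp: pentagon_amp_def)
  also have "(pentagon_amp 0)\<^sup>2 + (\<Sum>q<s. if q = 0 then 1 else 0) = (1::real)"
    using s_pos by (simp add: pentagon_amp_def)
  finally show ?thesis
    by (simp add: pentagon_pt_def norm_embed)
qed

lemma norm_curve_pt: "norm (curve_pt j) = 1"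
proof -
  let ?\<theta> = "2 * pi * real j / real r"
  have "(\<Sum>k<2 * s + 1. (trig_moment_curve curve_amp ?\<theta> k)\<^sup>2)
      = (curve_amp 0)\<^sup>2 + (\<Sum>q<s. (curve_amp (2 * q + 2))\<^sup>2)"
    by (rule sum_trig_moment_curve_sq) (simp add: curve_amp_def)
  also have "(\<Sum>q<s. (curve_amp (2 * q + 2))\<^sup>2) = (\<Sum>q<s. ratio / real r - (if q = 0 then 5 / (2 * real r) else 0))"
    by (intro sum.cong refl) (simp add: curve_amp_sq diff_divide_distrib)
  also have "\<dots> = real s * ratio / real r - 5 / (2 * real r)"
    using s_pos by (simp add: sum_subtractf)
  also have "(curve_amp 0)\<^sup>2 + (real s * ratio / real r - 5 / (2 * real r)) = 1"
    using ratio_mult r_gt by (simp add: curve_amp_sq field_simps)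
  finally show ?thesis
    by (simp add: curve_pt_def norm_embed)
qed

lemma inj_on_pentagon_pt: "inj_on pentagon_pt {..<5}"
proof (rule inj_onI)
  fix t t' assume "t \<in> {..<5}" "t' \<in> {..<5}" "pentagon_pt t = pentagon_pt t'"
  then show "t = t'"
    using trig_moment_curve_sample_inj[of pentagon_amp t 5 t'] embed_eqD[of _ _ 1] embed_eqD[of _ _ 2] s_pos
    by (simp add: pentagon_pt_def pentagon_amp_def)
qed

lemma inj_on_curve_pt: "inj_on curve_pt {..<r}"
proof (rule inj_onI)
  fix j j' assume "j \<in> {..<r}" "j' \<in> {..<r}" "curve_pt j = curve_pt j'"
  then show "j = j'"
    using trig_moment_curve_sample_inj[of curve_amp j r j'] embed_eqD[of _ _ 1] embed_eqD[of _ _ 2] s_pos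
      curve_amp_pos
    by (simp add: curve_pt_def less_imp_neq[symmetric])
qed

lemma sum_design:
  "(\<Sum>x\<in>design. h x)
    = (\<Sum>t<5. h (pentagon_pt t)) + (\<Sum>j<r. h (curve_pt j)) + (\<Sum>j<r. h (- curve_pt j))"
proof -
  obtain i0 where i0: "idx i0 = 0"
    using ex_idx_eq[of 0] by auto
  have P0: "pentagon_pt t $ i0 = 0" and V0: "curve_pt j $ i0 > 0" for t j
    using curve_amp_pos[of 0]
    by (simp_all add: i0 pentagon_pt_def curve_pt_def trig_moment_curve_def pentagon_amp_def
        harmonic_freq_def harmonic_phase_def)
  have disj1: "pentagon_pt ` {..<5} \<inter> curve_pt ` {..<r} = {}"
    using P0 V0 by (metis (no_types, lifting) disjoint_iff imageE less_irrefl)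
  have "x $ i0 \<ge> 0" if "x \<in> pentagon_pt ` {..<5} \<union> curve_pt ` {..<r}" for x
    using that P0 V0 by (auto simp: less_imp_le)
  moreover have "x $ i0 < 0" if "x \<in> (\<lambda>j. - curve_pt j) ` {..<r}" for x
    using that V0 by auto
  ultimately have disj2: "(pentagon_pt ` {..<5} \<union> curve_pt ` {..<r}) \<inter> (\<lambda>j. - curve_pt j) ` {..<r} = {}"
    by (meson disjoint_iff not_less)
  have inj_neg: "inj_on (\<lambda>j. - curve_pt j) {..<r}"
    using inj_on_curve_pt by (auto simp: inj_on_def)
  have "(\<Sum>x\<in>design. h x)
      = (\<Sum>x\<in>pentagon_pt ` {..<5}. h x) + (\<Sum>x\<in>curve_pt ` {..<r}. h x)
        + (\<Sum>x\<in>(\<lambda>j. - curve_pt j) ` {..<r}. h x)"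
    unfolding design_def using disj1 disj2 by (simp add: sum.union_disjoint)
  then show ?thesis
    by (simp add: sum.reindex[OF inj_on_pentagon_pt] sum.reindex[OF inj_on_curve_pt] sum.reindex[OF inj_neg])
qed

lemma card_design: "card design = 2 * r + 5"
  using sum_design[of "\<lambda>_. 1 :: nat"] by simp

lemma design_moment1: "(\<Sum>x\<in>design. x $ a) = 0"
  unfolding sum_design by (simp add: pentagon_pt_def sum_pentagon sum_negf)

lemma design_moment2:
  "(\<Sum>x\<in>design. x $ a * x $ b) = (if a = b then real (card design) / real CARD('n) else 0)"
proof -
  let ?k = "idx a"
  have "(\<Sum>x\<in>design. x $ a * x $ b)
      = (if a = b \<and> (?k = 1 \<or> ?k = 2) then 5 / 2 else 0)
        + 2 * (if a = b then real r * (curve_amp ?k)\<^sup>2 * (if ?k = 0 then 1 else 1 / 2) else 0)"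
    unfolding sum_design
    using sum_trig_moment_curve_orthogonal[OF idx_less idx_less r_gt, of curve_amp a b]
    by (simp add: pentagon_pt_def curve_pt_def sum_pentagon_mult2 idx_eq_iff)
  also have "\<dots> = (if a = b then ratio else 0)"
    using r_gt by (auto simp: curve_amp_sq field_simps)
  also have "ratio = real (card design) / real CARD('n)"
    by (simp add: ratio_def card_design card_coords)
  finally show ?thesis .
qed

lemma design_moment3: "(\<Sum>x\<in>design. x $ a * x $ b * x $ c) = 0"
  unfolding sum_design by (simp add: pentagon_pt_def sum_pentagon_mult3 sum_negf)

lemma spherical_design_design: "spherical_design 3 design"
proof (rule spherical_design_3I)
  show "finite design" and "design \<noteq> {}"
    using card_design by (auto intro: card_ge_0_finite)
  show "design \<subseteq> sphere 0 1"
    by (auto simp: design_def norm_pentagon_pt norm_curve_pt)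
qed (simp_all add: design_moment1 design_moment2 design_moment3)

end

theorem proposition6p4:
  fixes d n :: nat
  assumes dim: "CARD('n::finite) = d + 1"
    and "even d" and "d > 0" and "odd n"
    and "real n \<ge> 5 * (real d + 1) / 2" and "n \<ge> 2 * d + 7"
  shows "\<exists>X :: (real^'n) set. card X = n \<and> spherical_design 3 X"
proof -
  define s where "s = d div 2"
  define r where "r = (n - 5) div 2"
  have d: "d = 2 * s" and n: "n = 2 * r + 5"
    unfolding s_def r_def using assms by presburger+
  have "real (5 * (2 * s + 1)) \<le> real (2 * (2 * r + 5))"
    using assms(5) unfolding d n by simp
  then have "5 * (2 * s + 1) \<le> 2 * (2 * r + 5)"
    by (simp only: of_nat_le_iff)
  moreover have "5 * (2 * s + 1) \<noteq> 2 * (2 * r + 5)"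
    by presburger
  ultimately have size_gt: "5 * (2 * s + 1) < 2 * (2 * r + 5)"
    by linarith
  obtain idx :: "'n \<Rightarrow> nat" where "bij_betw idx UNIV {..<2 * s + 1}"
    using ex_bij_betw_finite_nat[of "UNIV :: 'n set"] dim d by (auto simp: atLeast0LessThan)
  then interpret pentagon_curve_design idx s r
    using assms(3,6) size_gt unfolding d n by unfold_locales simp_all
  show ?thesis
    using card_design spherical_design_design n by blast
qed

end
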